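(* The Kurepa conjecture, namely that $\gcd({!n},n!)=2$ for every integer $n\ge2$, is equivalent to the statement that $\gcd\big(\mathbb{F}_n,(n+1)!\big)=2$ for every integer $n\ge1$.
   Context: For a positive integer $n$, the Kurepa left factorial is ${!n}=\sum_{m=0}^{n-1}m!$. For $n\ge1$, $\mathbb{F}_n=\sum_{k=0}^n k!$. *)

theory Defs
  imports Main
begin

definition left_fact :: "nat \<Rightarrow> nat" where
  "left_fact n = (\<Sum>m<n. fact m)"

definition fact_sum :: "nat \<Rightarrow> nat" where
  "fact_sum n = (\<Sum>k\<le>n. fact k)"

end

theory Submission
  imports Defs
begin

lemma fact_sum_eq_left_fact_Suc: "fact_sum n = left_fact (Suc n)"
  unfolding fact_sum_def left_fact_def by (simp add: lessThan_Suc_atMost)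

lemma all_ge_Suc_shift: "(\<forall>n::nat \<ge> Suc k. P n) \<longleftrightarrow> (\<forall>n \<ge> k. P (Suc n))"
  by (metis Suc_le_D Suc_le_mono)

theorem theorem17:
  shows "(\<forall>n::nat. n \<ge> 2 \<longrightarrow> gcd (left_fact n) (fact n) = 2) \<longleftrightarrow>
         (\<forall>n::nat. n \<ge> 1 \<longrightarrow> gcd (fact_sum n) (fact (n + 1)) = 2)"
  using all_ge_Suc_shift [of 1 "\<lambda>n. gcd (left_fact n) (fact n) = 2"]
  by (simp add: fact_sum_eq_left_fact_Suc numeral_2_eq_2)

end
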